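(* Let $n\ge r\ge1$ be integers. For each $c>0$ define \[ \mathcal{L}_c:=\{X\in\mathbb{R}^{n\times r}:\ X_r\ge 0,\ \|X-I_{n\times r}\|_F\le c\,\|X_r-I_r\|_F\}. \] Then for each $c>0$ there exists $\delta>0$ such that for all $X\in\mathcal{L}_c$ with $\|X-I_{n\times r}\|_F\le\delta$, \[ \|X_r-I_r\|_F\le 2.1\sqrt{r}\,\|\sigma(X)-e\|. \]
   Context: For $X\in\mathbb{R}^{n\times r}$, $X_r$ denotes the $r\times r$ submatrix formed by the first $r$ rows of $X$, and $\sigma(X)\in\mathbb{R}^r$ is the vector of singular values of $X$ arranged in nonincreasing order. $I_{n\times r}$ is the $n\times r$ rectangular identity matrix (first $r$ rows form $I_r$, remaining rows zero), $e\in\mathbb{R}^r$ is the all-ones vector, $\|\cdot\|$ is the Euclidean norm, $\|\cdot\|_F$ the Frobenius norm, and $X_r\ge0$ means entrywise nonnegativity. *)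

theory Defs
  imports Complex_Main "Jordan_Normal_Form.Char_Poly"
begin

text \<open>Matrices X in R^{n x r} are Jordan_Normal_Form matrices in carrier_mat n r.\<close>

definition frob_norm :: "real mat \<Rightarrow> real" where
  "frob_norm A = sqrt (\<Sum>i<dim_row A. \<Sum>j<dim_col A. (A $$ (i,j))^2)"

definition top_block :: "nat \<Rightarrow> real mat \<Rightarrow> real mat" where
  "top_block r X = mat r (dim_col X) (\<lambda>(i,j). X $$ (i,j))"

definition rect_id :: "nat \<Rightarrow> nat \<Rightarrow> real mat" where
  "rect_id n r = mat n r (\<lambda>(i,j). if i = j then 1 else 0)"

definition entrywise_nonneg :: "real mat \<Rightarrow> bool" where
  "entrywise_nonneg A \<longleftrightarrow> (\<forall>i<dim_row A. \<forall>j<dim_col A. A $$ (i,j) \<ge> 0)"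

text \<open>Singular values sigma(X): square roots of the eigenvalues (with multiplicity,
  i.e. roots of the characteristic polynomial) of X^T X, in nonincreasing order.\<close>
definition singular_values :: "real mat \<Rightarrow> real list" where
  "singular_values X =
     rev (sorted_list_of_multiset (image_mset sqrt (proots (char_poly (transpose_mat X * X)))))"

definition vec_norm :: "real list \<Rightarrow> real" where
  "vec_norm v = sqrt (\<Sum>x\<leftarrow>v. x^2)"

definition sigma_dist :: "real mat \<Rightarrow> real" where
  "sigma_dist X = vec_norm (map (\<lambda>s. s - 1) (singular_values X))"

definition L_set :: "nat \<Rightarrow> nat \<Rightarrow> real \<Rightarrow> real mat set" where
  "L_set n r c = {X \<in> carrier_mat n r.
      entrywise_nonneg (top_block r X) \<and>
      frob_norm (X - rect_id n r) \<le> c * frob_norm (top_block r X - 1\<^sub>m r)}"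

end

theory Submission
  imports Defs "HOL-Analysis.L2_Norm" "Jordan_Normal_Form.Schur_Decomposition"
begin

(* Write F = X - I_{n x r} and E = F_r, so that X^T X - I_r = E + E^T + F^T F.
  Because the off-diagonal entries of E are nonnegative, ||E + E^T|| >= sqrt 2 ||E||, whereas
  ||F^T F|| <= ||F||^2 <= c^2 ||E||^2 is of second order on L_c.  Hence ||X^T X - I_r|| is
  comparable to ||E||.  As X^T X is symmetric, ||X^T X - I_r|| is the l2-distance from e of its
  eigenvalues mu = sigma^2, and close to 1 the square root changes distances to 1 by at most
  a constant factor: |mu - 1| = (sqrt mu + 1) |sqrt mu - 1|. *)

definition mat_trace :: "'a :: comm_ring_1 mat \<Rightarrow> 'a" where
  "mat_trace A = (\<Sum>i<dim_row A. A $$ (i,i))"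

lemma mat_trace_mult_comm:
  assumes A: "A \<in> carrier_mat n m" and B: "B \<in> carrier_mat m n"
  shows "mat_trace (A * B) = mat_trace (B * A)"
proof -
  have "mat_trace (A * B) = (\<Sum>i<n. \<Sum>k<m. A $$ (i,k) * B $$ (k,i))"
    using A B by (simp add: mat_trace_def scalar_prod_def lessThan_atLeast0)
  also have "\<dots> = (\<Sum>k<m. \<Sum>i<n. B $$ (k,i) * A $$ (i,k))"
    by (subst sum.swap) (simp add: mult.commute)
  also have "\<dots> = mat_trace (B * A)"
    using A B by (simp add: mat_trace_def scalar_prod_def lessThan_atLeast0)
  finally show ?thesis .
qed

lemma similar_mat_wit_mat_trace:
  assumes "similar_mat_wit A B P Q"
  shows "mat_trace A = mat_trace B"
proof -
  define n where "n = dim_row A"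
  note wit = similar_mat_witD[OF n_def assms]
  have "mat_trace (P * B * Q) = mat_trace (Q * (P * B))"
    using wit by (intro mat_trace_mult_comm) auto
  also have "Q * (P * B) = B"
    using wit by (simp add: assoc_mult_mat[of Q n n P n B n, symmetric])
  finally show ?thesis using wit by simp
qed

lemma upper_triangular_mult_diag:
  assumes A: "A \<in> carrier_mat n n" and B: "B \<in> carrier_mat n n"
    and "upper_triangular A" "upper_triangular B" and i: "i < n"
  shows "(A * B) $$ (i,i) = A $$ (i,i) * B $$ (i,i)"
proof -
  have "(A * B) $$ (i,i) = (\<Sum>k<n. A $$ (i,k) * B $$ (k,i))"
    using A B i by (simp add: scalar_prod_def lessThan_atLeast0)
  also have "\<dots> = (\<Sum>k\<in>{i}. A $$ (i,k) * B $$ (k,i))"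
  proof (intro sum.mono_neutral_right ballI)
    fix k assume "k \<in> {..<n} - {i}"
    then consider "k < i" | "i < k" "k < n" by (auto simp: nat_neq_iff)
    then show "A $$ (i,k) * B $$ (k,i) = 0"
      by cases (use assms in \<open>auto dest: upper_triangularD\<close>)
  qed (use i in auto)
  finally show ?thesis by simp
qed

lemma mat_trace_square_shift:
  fixes A :: "'a :: conjugatable_ordered_field mat"
  assumes A: "A \<in> carrier_mat n n" and split: "char_poly A = (\<Prod>\<mu>\<leftarrow>mus. [:-\<mu>, 1:])"
  shows "mat_trace ((A - a \<cdot>\<^sub>m 1\<^sub>m n) * (A - a \<cdot>\<^sub>m 1\<^sub>m n)) = (\<Sum>\<mu>\<leftarrow>mus. (\<mu> - a)^2)"
proof -
  obtain B P Q where "schur_decomposition A mus = (B, P, Q)"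
    by (cases "schur_decomposition A mus")
  from schur_decomposition[OF A split this]
  have wit: "similar_mat_wit A B P Q" and ut: "upper_triangular B" and diag: "diag_mat B = mus"
    by auto
  note carrier = similar_mat_witD2[OF A wit]
  define C where "C = B - a \<cdot>\<^sub>m 1\<^sub>m n"
  have C: "C \<in> carrier_mat n n" and ut_C: "upper_triangular C"
    using carrier ut by (auto simp: C_def upper_triangular_def)
  have "P * (a \<cdot>\<^sub>m 1\<^sub>m n) = a \<cdot>\<^sub>m P"
    using mult_smult_distrib[of P n n "1\<^sub>m n" n a] carrier by simp
  hence "P * C = P * B - a \<cdot>\<^sub>m P"
    using carrier by (simp add: C_def mult_minus_distrib_mat[of P n n])
  hence "P * C * Q = P * B * Q - a \<cdot>\<^sub>m (P * Q)"
    using carrier by (simp add: minus_mult_distrib_mat[of _ n n] mult_smult_assoc_mat)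
  hence "similar_mat_wit (A - a \<cdot>\<^sub>m 1\<^sub>m n) C P Q"
    using carrier C by (intro similar_mat_witI[of P Q n]) auto
  from similar_mat_wit_pow[OF this, of 2]
  have "similar_mat_wit ((A - a \<cdot>\<^sub>m 1\<^sub>m n) * (A - a \<cdot>\<^sub>m 1\<^sub>m n)) (C * C) P Q"
    using A C by (simp add: numeral_2_eq_2)
  hence "mat_trace ((A - a \<cdot>\<^sub>m 1\<^sub>m n) * (A - a \<cdot>\<^sub>m 1\<^sub>m n)) = mat_trace (C * C)"
    by (rule similar_mat_wit_mat_trace)
  also have "\<dots> = (\<Sum>i<n. (C $$ (i,i))^2)"
    using C upper_triangular_mult_diag[OF C C ut_C ut_C]
    by (simp add: mat_trace_def power2_eq_square del: index_mult_mat(1))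
  also have "\<dots> = (\<Sum>\<mu>\<leftarrow>mus. (\<mu> - a)^2)"
    using carrier unfolding diag[symmetric] diag_mat_def
    by (simp add: C_def o_def interv_sum_list_conv_sum_set_nat lessThan_atLeast0)
  finally show ?thesis .
qed

lemma symmetric_mat_eigenvalue_real:
  fixes M :: "real mat" and z :: complex
  assumes M: "M \<in> carrier_mat n n" and sym: "transpose_mat M = M"
    and ev: "eigenvalue (map_mat complex_of_real M) z"
  shows "z \<in> \<real>"
proof -
  let ?M = "map_mat complex_of_real M"
  obtain v where v: "v \<in> carrier_vec n" "v \<noteq> 0\<^sub>v n" and Mv: "?M *\<^sub>v v = z \<cdot>\<^sub>v v"
    using ev M unfolding eigenvalue_def eigenvector_def by auto
  have M_sym: "M $$ (i,j) = M $$ (j,i)" if "i < n" "j < n" for i j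
    using that M arg_cong[OF sym, of "\<lambda>A. A $$ (i,j)"] by simp
  have "(?M *\<^sub>v v) \<bullet>c v = (\<Sum>i<n. \<Sum>j<n. of_real (M $$ (i,j)) * v $ j * cnj (v $ i))"
    using M v by (simp add: scalar_prod_def sum_distrib_right lessThan_atLeast0)
  also have "\<dots> = (\<Sum>j<n. \<Sum>i<n. v $ j * of_real (M $$ (j,i)) * cnj (v $ i))"
    by (subst sum.swap) (intro sum.cong refl, simp add: M_sym mult_ac)
  also have "\<dots> = v \<bullet>c (?M *\<^sub>v v)"
    using M v by (simp add: scalar_prod_def sum_distrib_left sum_conjugate lessThan_atLeast0 mult.assoc)
  finally have "z * (v \<bullet>c v) = cnj z * (v \<bullet>c v)"
    using v by (simp add: Mv conjugate_smult_vec)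
  moreover have "v \<bullet>c v \<noteq> 0"
    using v by simp
  ultimately show ?thesis
    by (simp add: Reals_cnj_iff)
qed

lemma symmetric_mat_char_poly_splits:
  fixes M :: "real mat"
  assumes M: "M \<in> carrier_mat n n" and sym: "transpose_mat M = M"
  obtains mus where "char_poly M = (\<Prod>\<mu>\<leftarrow>mus. [:-\<mu>, 1:])"
proof -
  let ?M = "map_mat complex_of_real M"
  obtain as where as: "char_poly ?M = (\<Prod>a\<leftarrow>as. [:-a, 1:])"
    using char_poly_factorized[of ?M n] M by auto
  have "a \<in> \<real>" if "a \<in> set as" for a
  proof (rule symmetric_mat_eigenvalue_real[OF M sym])
    have "poly (char_poly ?M) a = 0"
      using that by (auto simp: as poly_prod_list prod_list_zero_iff)
    then show "eigenvalue ?M a"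
      using M by (simp add: eigenvalue_root_char_poly)
  qed
  then have lin: "(\<Prod>a\<leftarrow>as. [:-a, 1:]) = (\<Prod>\<mu>\<leftarrow>map Re as. [:-complex_of_real \<mu>, 1:])"
    by (simp add: o_def) (intro arg_cong[where f = prod_list] map_cong, auto elim!: Reals_cases)
  interpret of_real_poly_hom: map_poly_inj_idom_hom complex_of_real ..
  have "map_poly complex_of_real (char_poly M)
      = map_poly complex_of_real (\<Prod>\<mu>\<leftarrow>map Re as. [:-\<mu>, 1:])"
    using M by (simp add: of_real_hom.char_poly_hom[symmetric] as lin of_real_poly_hom.hom_prod_list o_def)
  then show ?thesis
    using that[of "map Re as"] by simp
qed

lemma frob_norm_eq_L2_set:
  "frob_norm A = L2_set (\<lambda>(i,j). A $$ (i,j)) ({..<dim_row A} \<times> {..<dim_col A})"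
  unfolding frob_norm_def L2_set_def by (simp add: sum.cartesian_product case_prod_beta)

lemma frob_norm_nonneg: "0 \<le> frob_norm A"
  by (simp add: frob_norm_eq_L2_set)

lemma frob_norm_square: "frob_norm A ^ 2 = (\<Sum>i<dim_row A. \<Sum>j<dim_col A. (A $$ (i,j))^2)"
  unfolding frob_norm_def by (simp add: sum_nonneg)

lemma frob_norm_add_le:
  assumes "A \<in> carrier_mat n m" "B \<in> carrier_mat n m"
  shows "frob_norm (A + B) \<le> frob_norm A + frob_norm B"
proof -
  have "frob_norm (A + B)
      = L2_set (\<lambda>x. (\<lambda>(i,j). A $$ (i,j)) x + (\<lambda>(i,j). B $$ (i,j)) x) ({..<n} \<times> {..<m})"
    using assms by (auto simp: frob_norm_eq_L2_set intro: L2_set_cong)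
  also have "\<dots> \<le> frob_norm A + frob_norm B"
    using assms by (simp add: frob_norm_eq_L2_set L2_set_triangle_ineq)
  finally show ?thesis .
qed

lemma frob_norm_add_ge:
  assumes "A \<in> carrier_mat n m" "B \<in> carrier_mat n m"
  shows "frob_norm A - frob_norm B \<le> frob_norm (A + B)"
proof -
  define S where "S = {..<n} \<times> {..<m}"
  define f where "f = (\<lambda>(i,j). (A + B) $$ (i,j))"
  define g where "g = (\<lambda>(i,j). - B $$ (i,j))"
  have "frob_norm A = L2_set (\<lambda>x. f x + g x) S"
    using assms by (auto simp: frob_norm_eq_L2_set f_def g_def S_def intro: L2_set_cong)
  also have "\<dots> \<le> L2_set f S + L2_set g S"
    by (rule L2_set_triangle_ineq)
  also have "\<dots> = frob_norm (A + B) + frob_norm B"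
    using assms by (simp add: frob_norm_eq_L2_set f_def g_def S_def L2_set_def case_prod_beta)
  finally show ?thesis by simp
qed

lemma frob_norm_transpose: "frob_norm (transpose_mat A) = frob_norm A"
  unfolding frob_norm_def by (subst sum.swap) simp

lemma frob_norm_mult_le:
  assumes A: "A \<in> carrier_mat n m" and B: "B \<in> carrier_mat m k"
  shows "frob_norm (A * B) \<le> frob_norm A * frob_norm B"
proof -
  define a where "a i = (\<Sum>l<m. (A $$ (i,l))^2)" for i
  define b where "b j = (\<Sum>l<m. (B $$ (l,j))^2)" for j
  have entry: "((A * B) $$ (i,j))^2 \<le> a i * b j" if "i < n" "j < k" for i j
  proof -
    have "\<bar>(A * B) $$ (i,j)\<bar> \<le> (\<Sum>l<m. \<bar>A $$ (i,l)\<bar> * \<bar>B $$ (l,j)\<bar>)"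
      using that A B by (simp add: scalar_prod_def lessThan_atLeast0 sum_abs[THEN order_trans] abs_mult)
    also have "\<dots> \<le> sqrt (a i) * sqrt (b j)"
      using L2_set_mult_ineq[of "\<lambda>l. A $$ (i,l)" "\<lambda>l. B $$ (l,j)" "{..<m}"]
      by (simp add: a_def b_def L2_set_def)
    finally show ?thesis
      using power_mono[of _ _ 2] by (fastforce simp: a_def b_def power_mult_distrib sum_nonneg)
  qed
  have "frob_norm (A * B) ^ 2 = (\<Sum>i<n. \<Sum>j<k. ((A * B) $$ (i,j))^2)"
    using A B by (simp add: frob_norm_square del: index_mult_mat(1))
  also have "\<dots> \<le> (\<Sum>i<n. \<Sum>j<k. a i * b j)"
    using entry by (intro sum_mono) auto
  also have "\<dots> = (\<Sum>i<n. a i) * (\<Sum>j<k. b j)"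
    by (simp add: sum_product)
  also have "(\<Sum>j<k. b j) = frob_norm B ^ 2"
    unfolding b_def using B by (subst sum.swap) (simp add: frob_norm_square)
  also have "(\<Sum>i<n. a i) = frob_norm A ^ 2"
    unfolding a_def using A by (simp add: frob_norm_square)
  also have "frob_norm A ^ 2 * frob_norm B ^ 2 = (frob_norm A * frob_norm B) ^ 2"
    by (simp add: power_mult_distrib)
  finally show ?thesis
    by (rule power2_le_imp_le) (simp add: frob_norm_nonneg)
qed

lemma frob_norm_top_block_le:
  assumes "r \<le> dim_row A"
  shows "frob_norm (top_block r A) \<le> frob_norm A"
  unfolding frob_norm_def top_block_def
  using assms by (auto intro!: real_sqrt_le_mono sum_mono2 sum_nonneg)

lemma frob_norm_add_transpose_ge:
  assumes A: "A \<in> carrier_mat n n"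
    and off_diag: "\<And>i j. i < n \<Longrightarrow> j < n \<Longrightarrow> i \<noteq> j \<Longrightarrow> 0 \<le> A $$ (i,j)"
  shows "2 * frob_norm A ^ 2 \<le> frob_norm (A + transpose_mat A) ^ 2"
proof -
  have "frob_norm (A + transpose_mat A) ^ 2
      = 2 * frob_norm A ^ 2 + 2 * (\<Sum>i<n. \<Sum>j<n. A $$ (i,j) * A $$ (j,i))"
  proof -
    have "(\<Sum>i<n. \<Sum>j<n. (A $$ (j,i))^2) = frob_norm A ^ 2"
      using A by (subst sum.swap) (simp add: frob_norm_square)
    then show ?thesis
      using A by (simp add: frob_norm_square power2_sum sum.distrib sum_distrib_left mult.assoc)
  qed
  moreover have "0 \<le> (\<Sum>i<n. \<Sum>j<n. A $$ (i,j) * A $$ (j,i))"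
  proof (intro sum_nonneg)
    fix i j assume "i \<in> {..<n}" "j \<in> {..<n}"
    then show "0 \<le> A $$ (i,j) * A $$ (j,i)"
      using off_diag[of i j] off_diag[of j i] by (cases "i = j") auto
  qed
  ultimately show ?thesis
    by simp
qed

lemma mat_trace_mult_transpose:
  assumes "A \<in> carrier_mat n m"
  shows "mat_trace (A * transpose_mat A) = frob_norm A ^ 2"
  unfolding frob_norm_square
  using assms by (simp add: mat_trace_def scalar_prod_def lessThan_atLeast0 power2_eq_square)

lemma dim_rect_id [simp]: "dim_row (rect_id n r) = n" "dim_col (rect_id n r) = r"
  by (simp_all add: rect_id_def)

lemma top_block_minus_rect_id:
  assumes "X \<in> carrier_mat n r" "r \<le> n"
  shows "top_block r (X - rect_id n r) = top_block r X - 1\<^sub>m r"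
  using assms by (intro eq_matI) (auto simp: top_block_def rect_id_def)

lemma transpose_mult_self_minus_one:
  fixes X :: "real mat"
  assumes X: "X \<in> carrier_mat n r" and "r \<le> n"
  defines "F \<equiv> X - rect_id n r"
  shows "transpose_mat X * X - 1\<^sub>m r
    = top_block r F + transpose_mat (top_block r F) + transpose_mat F * F" (is "_ = ?R")
proof (rule eq_matI)
  fix i j assume "i < dim_row ?R" "j < dim_col ?R"
  then have "i < r" "j < r"
    by (simp_all add: top_block_def F_def)
  with assms(2) have "i < n" "j < n"
    by simp_all
  have "(\<Sum>k<n. (X $$ (k,i) - (if k = i then 1 else 0)) * (X $$ (k,j) - (if k = j then 1 else 0)))
      = (\<Sum>k<n. X $$ (k,i) * X $$ (k,j) - (if k = i then X $$ (k,j) else 0)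
           - (if k = j then X $$ (k,i) else 0) + (if k = i \<and> k = j then 1 else 0))"
    by (intro sum.cong) (auto simp: algebra_simps)
  also have "\<dots> = (\<Sum>k<n. X $$ (k,i) * X $$ (k,j)) - X $$ (i,j) - X $$ (j,i) + (if i = j then 1 else 0)"
    using \<open>i < n\<close> \<open>j < n\<close> by (simp add: sum.distrib sum_subtractf)
  finally show "(transpose_mat X * X - 1\<^sub>m r) $$ (i,j) = ?R $$ (i,j)"
    using \<open>i < r\<close> \<open>j < r\<close> \<open>i < n\<close> \<open>j < n\<close> X
    by (simp add: F_def top_block_def rect_id_def scalar_prod_def atLeast0LessThan)
qed (use X in \<open>auto simp: F_def top_block_def\<close>)

lemma frob_norm_gram_deviation_bounds:
  fixes X :: "real mat"
  assumes X: "X \<in> carrier_mat n r" and rn: "r \<le> n"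
    and nonneg: "entrywise_nonneg (top_block r X)"
  defines "e \<equiv> frob_norm (top_block r X - 1\<^sub>m r)" and "f \<equiv> frob_norm (X - rect_id n r)"
    and "D \<equiv> frob_norm (transpose_mat X * X - 1\<^sub>m r)"
  shows "7/5 * e - f^2 \<le> D" and "D \<le> 2 * e + f^2"
proof -
  define F where "F = X - rect_id n r"
  define E where "E = top_block r F"
  have F: "F \<in> carrier_mat n r" and E: "E \<in> carrier_mat r r"
    using X by (auto simp: F_def E_def rect_id_def top_block_def)
  have e: "e = frob_norm E"
    using X rn by (simp add: e_def E_def F_def top_block_minus_rect_id)
  have D: "D = frob_norm ((E + transpose_mat E) + transpose_mat F * F)"
    using X rn by (simp add: D_def E_def F_def transpose_mult_self_minus_one)
  have FF: "frob_norm (transpose_mat F * F) \<le> f^2"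
    using frob_norm_mult_le[of "transpose_mat F" r n F r] F
    by (simp add: f_def F_def frob_norm_transpose power2_eq_square)
  have "2 * e^2 \<le> frob_norm (E + transpose_mat E) ^ 2"
    unfolding e
  proof (rule frob_norm_add_transpose_ge[OF E])
    fix i j assume "i < r" "j < r" "i \<noteq> j"
    then show "0 \<le> E $$ (i,j)"
      using nonneg X rn by (auto simp: entrywise_nonneg_def E_def F_def top_block_def rect_id_def)
  qed
  moreover have "(7/5 * e)^2 = 49/25 * e^2"
    by (simp add: power2_eq_square)
  ultimately have "(7/5 * e)^2 \<le> frob_norm (E + transpose_mat E) ^ 2"
    using zero_le_power2[of e] by linarith
  then have lower: "7/5 * e \<le> frob_norm (E + transpose_mat E)"
    by (rule power2_le_imp_le) (simp add: frob_norm_nonneg)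
  have upper: "frob_norm (E + transpose_mat E) \<le> 2 * e"
    using frob_norm_add_le[of E r r "transpose_mat E"] E by (simp add: e frob_norm_transpose)
  show "7/5 * e - f^2 \<le> D"
    using frob_norm_add_ge[of "E + transpose_mat E" r r "transpose_mat F * F"] E F lower FF
    by (simp add: D)
  show "D \<le> 2 * e + f^2"
    using frob_norm_add_le[of "E + transpose_mat E" r r "transpose_mat F * F"] E F upper FF
    by (simp add: D)
qed

lemma square_diff_one_le_sqrt:
  fixes \<mu> :: real
  assumes "\<bar>\<mu> - 1\<bar> \<le> 1/10"
  shows "(\<mu> - 1)^2 \<le> 421/100 * (sqrt \<mu> - 1)^2"
proof -
  have "0 \<le> \<mu>"
    using abs_le_D2[OF assms] by simp
  have "sqrt \<mu> \<le> 21/20"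
    using abs_le_D1[OF assms] by (intro real_le_lsqrt) (auto simp: power2_eq_square)
  then have "(sqrt \<mu> + 1)^2 \<le> (41/20)^2"
    using \<open>0 \<le> \<mu>\<close> by (intro power_mono) auto
  then have bound: "(sqrt \<mu> + 1)^2 \<le> 421/100"
    by (simp add: power2_eq_square)
  have "\<mu> - 1 = (sqrt \<mu> + 1) * (sqrt \<mu> - 1)"
    using \<open>0 \<le> \<mu>\<close> by (simp add: algebra_simps)
  then have "(\<mu> - 1)^2 = (sqrt \<mu> + 1)^2 * (sqrt \<mu> - 1)^2"
    by (simp add: power_mult_distrib)
  also have "\<dots> \<le> 421/100 * (sqrt \<mu> - 1)^2"
    using bound by (rule mult_right_mono) simp
  finally show ?thesis .
qed

lemma sum_list_square_diff_one_le_sqrt: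
  fixes mus :: "real list"
  assumes small: "(\<Sum>\<mu>\<leftarrow>mus. (\<mu> - 1)^2) \<le> 1/100"
  shows "(\<Sum>\<mu>\<leftarrow>mus. (\<mu> - 1)^2) \<le> 421/100 * (\<Sum>\<mu>\<leftarrow>mus. (sqrt \<mu> - 1)^2)"
proof -
  have "\<bar>\<mu> - 1\<bar> \<le> 1/10" if "\<mu> \<in> set mus" for \<mu>
  proof -
    have "(\<mu> - 1)^2 \<le> (\<Sum>\<mu>\<leftarrow>mus. (\<mu> - 1)^2)"
      by (rule member_le_sum_list) (use that in auto)
    then have "(\<mu> - 1)^2 \<le> (1/10)^2"
      using small by (simp add: power2_eq_square)
    then show ?thesis
      using abs_le_square_iff[of "\<mu> - 1" "1/10"] by simp
  qed
  then have "(\<Sum>\<mu>\<leftarrow>mus. (\<mu> - 1)^2) \<le> (\<Sum>\<mu>\<leftarrow>mus. 421/100 * (sqrt \<mu> - 1)^2)"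
    by (intro sum_list_mono square_diff_one_le_sqrt)
  then show ?thesis
    by (simp only: sum_list_const_mult)
qed

lemma perturbation_bounds:
  fixes c e f D :: real
  assumes "0 \<le> e" "e \<le> f" "f \<le> c * e" "f \<le> 1/25" "c^2 * f \<le> 1/10"
    and lower: "7/5 * e - f^2 \<le> D" and upper: "D \<le> 2 * e + f^2"
  shows "13/10 * e \<le> D" and "D \<le> 1/10"
proof -
  have "f^2 \<le> (c * e)^2"
    using assms by (intro power_mono) auto
  also have "\<dots> = (c^2 * e) * e"
    by (simp add: power2_eq_square)
  also have "\<dots> \<le> (c^2 * f) * e"
    using assms by (intro mult_right_mono mult_left_mono) auto
  also have "\<dots> \<le> 1/10 * e"
    using assms by (intro mult_right_mono) auto
  finally show "13/10 * e \<le> D"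
    using lower by linarith
  have "f^2 \<le> (1/25)^2"
    using assms by (intro power_mono) auto
  then show "D \<le> 1/10"
    using upper assms by (simp add: power2_eq_square)
qed

lemma le_sqrt_of_deviation_bounds:
  fixes e D s :: real
  assumes "0 \<le> e" "13/10 * e \<le> D" "D^2 \<le> 421/100 * s" "1 \<le> r"
  shows "e \<le> 2.1 * sqrt (real r) * sqrt s"
proof -
  have "(13/10 * e)^2 \<le> D^2"
    using assms by (intro power_mono) auto
  moreover have "(13/10 * e)^2 = 169/100 * e^2"
    by (simp add: power2_eq_square)
  moreover have "0 \<le> s"
    using assms(3) zero_le_power2[of D] by linarith
  moreover from this have "s \<le> real r * s"
    using assms(4) by (simp add: mult_le_cancel_right1)
  ultimately have "e^2 \<le> (21/10)^2 * real r * s"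
    using assms(3) by (simp add: power2_eq_square)
  then have "e \<le> sqrt ((21/10)^2 * real r * s)"
    by (rule real_le_rsqrt)
  then show ?thesis
    by (simp add: real_sqrt_mult)
qed

lemma sigma_dist_eq_eigenvalues:
  assumes "char_poly (transpose_mat X * X) = (\<Prod>\<mu>\<leftarrow>mus. [:-\<mu>, 1:])"
  shows "sigma_dist X = sqrt (\<Sum>\<mu>\<leftarrow>mus. (sqrt \<mu> - 1)^2)"
proof -
  have "proots (char_poly (transpose_mat X * X)) = mset mus"
    unfolding assms
  proof (induction mus)
    case (Cons \<mu> mus)
    have "(\<Prod>\<mu>\<leftarrow>mus. [:-\<mu>, 1:]) \<noteq> 0"
      by (auto simp: prod_list_zero_iff)
    then show ?case
      using Cons by (simp add: proots_mult del: mult_pCons_left)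
  qed simp
  then show ?thesis
    unfolding sigma_dist_def vec_norm_def singular_values_def
    by (simp add: rev_map[symmetric] sum_mset_sum_list[symmetric] image_mset.compositionality o_def)
qed

lemma symmetric_mat_eigenvalue_deviation_eq_frob_norm:
  fixes M :: "real mat"
  assumes M: "M \<in> carrier_mat n n" and sym: "transpose_mat M = M"
    and split: "char_poly M = (\<Prod>\<mu>\<leftarrow>mus. [:-\<mu>, 1:])"
  shows "(\<Sum>\<mu>\<leftarrow>mus. (\<mu> - 1)^2) = frob_norm (M - 1\<^sub>m n) ^ 2"
proof -
  have "(1::real) \<cdot>\<^sub>m 1\<^sub>m n = 1\<^sub>m n"
    by (intro eq_matI) auto
  then have "(\<Sum>\<mu>\<leftarrow>mus. (\<mu> - 1)^2) = mat_trace ((M - 1\<^sub>m n) * (M - 1\<^sub>m n))"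
    using mat_trace_square_shift[OF M split, of 1] by simp
  also have "\<dots> = mat_trace ((M - 1\<^sub>m n) * transpose_mat (M - 1\<^sub>m n))"
    using M sym by (simp add: transpose_minus)
  also have "\<dots> = frob_norm (M - 1\<^sub>m n) ^ 2"
    by (rule mat_trace_mult_transpose[OF minus_carrier_mat[OF one_carrier_mat]])
  finally show ?thesis .
qed

lemma L_set_top_block_le_sigma_dist:
  fixes X :: "real mat"
  assumes r: "1 \<le> r" "r \<le> n" and XL: "X \<in> L_set n r c"
    and small: "frob_norm (X - rect_id n r) \<le> 1/25" "c^2 * frob_norm (X - rect_id n r) \<le> 1/10"
  shows "frob_norm (top_block r X - 1\<^sub>m r) \<le> 2.1 * sqrt (real r) * sigma_dist X"
proof -
  define e where "e = frob_norm (top_block r X - 1\<^sub>m r)"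
  define f where "f = frob_norm (X - rect_id n r)"
  define D where "D = frob_norm (transpose_mat X * X - 1\<^sub>m r)"
  from XL have X: "X \<in> carrier_mat n r" and nonneg: "entrywise_nonneg (top_block r X)"
    and cone: "f \<le> c * e"
    by (auto simp: L_set_def e_def f_def)
  have "e \<le> f"
    using frob_norm_top_block_le[of r "X - rect_id n r"] X r
    by (simp add: e_def f_def top_block_minus_rect_id)
  moreover have "0 \<le> e"
    by (simp add: e_def frob_norm_nonneg)
  ultimately have "13/10 * e \<le> D" "D \<le> 1/10"
    using perturbation_bounds cone small frob_norm_gram_deviation_bounds[OF X r(2) nonneg]
    unfolding e_def f_def D_def by blast+
  have "transpose_mat X * X \<in> carrier_mat r r" "transpose_mat (transpose_mat X * X) = transpose_mat X * X"
    using X by (auto simp: transpose_mult[of _ r n])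
  then obtain mus where split: "char_poly (transpose_mat X * X) = (\<Prod>\<mu>\<leftarrow>mus. [:-\<mu>, 1:])"
    and deviation: "(\<Sum>\<mu>\<leftarrow>mus. (\<mu> - 1)^2) = D^2"
    by (metis symmetric_mat_char_poly_splits symmetric_mat_eigenvalue_deviation_eq_frob_norm D_def)
  define s where "s = (\<Sum>\<mu>\<leftarrow>mus. (sqrt \<mu> - 1)^2)"
  have "D^2 \<le> 1/100"
    using power_mono[OF \<open>D \<le> 1/10\<close>, of 2] by (simp add: D_def frob_norm_nonneg power_divide)
  then have "D^2 \<le> 421/100 * s"
    using sum_list_square_diff_one_le_sqrt[of mus] deviation by (simp add: s_def)
  then show ?thesis
    using le_sqrt_of_deviation_bounds \<open>0 \<le> e\<close> \<open>13/10 * e \<le> D\<close> r(1)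
    unfolding e_def s_def sigma_dist_eq_eigenvalues[OF split] by blast
qed

theorem lemma3p1:
  fixes n r :: nat and c :: real
  assumes "1 \<le> r" and "r \<le> n" and "c > 0"
  shows "\<exists>\<delta>>0. \<forall>X \<in> L_set n r c.
           frob_norm (X - rect_id n r) \<le> \<delta> \<longrightarrow>
           frob_norm (top_block r X - 1\<^sub>m r) \<le> 2.1 * sqrt (real r) * sigma_dist X"
proof (intro exI[of _ "min (1/25) (1/(10 * c^2))"] conjI ballI impI)
  show "0 < min (1/25) (1/(10 * c^2))"
    using assms(3) by simp
  fix X assume "X \<in> L_set n r c" and "frob_norm (X - rect_id n r) \<le> min (1/25) (1/(10 * c^2))"
  moreover from this have "c^2 * frob_norm (X - rect_id n r) \<le> 1/10"
    using assms(3) by (simp add: field_simps)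
  ultimately show "frob_norm (top_block r X - 1\<^sub>m r) \<le> 2.1 * sqrt (real r) * sigma_dist X"
    using L_set_top_block_le_sigma_dist assms(1,2) by simp
qed

end
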